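(* Let $R$ be a commutative ring and $H$ an $R$-algebra which is a free $R$-module with basis $\mathcal{B}=\{z^k y_i : k=0,\dots,m-1,\ i=1,\dots,l\}$, where $z\in H$ is central, $y_1=1_H$, and $y_1,\dots,y_l\in H$. Let $\tau_{\mathcal{B}}\colon H\to R$ be the $R$-linear map with $\tau_{\mathcal{B}}(1_H)=1$ and $\tau_{\mathcal{B}}(b)=0$ for $b\in\mathcal{B}\setminus\{1_H\}$. For every integer $k\ge 0$ let $A^k$ be the $l\times l$ matrix $A^k=(\tau_{\mathcal{B}}(z^k y_{i_1}y_{i_2}))_{i_1,i_2=1}^l$. For $i=1,\dots,l$ write $z^m y_i=\sum_{p=0}^{m-1}\sum_{q=1}^l \zeta^p_{iq}\, z^p y_q$ with $\zeta^p_{iq}\in R$, and let $Z^p=(\zeta^p_{iq})_{i,q=1}^l$ for $p=0,\dots,m-1$. Then for every $\alpha\in\{0,\dots,m-2\}$, $$A^{\alpha+m}=\sum_{p=0}^{m-1} Z^p A^{\alpha+p},$$ i.e. $A^{\alpha+m}$ equals the $l\times lm$ matrix $(Z^0\ Z^1\ \cdots\ Z^{m-1})$ multiplied by the $lm\times l$ matrix obtained by stacking $A^{\alpha},A^{\alpha+1},\dots,A^{\alpha+m-1}$ vertically.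
   Context: The Gram matrix of $\tau_{\mathcal{B}}$ with respect to $\mathcal{B}$ has entries $\tau_{\mathcal{B}}(z^{k_1}y_{i_1}z^{k_2}y_{i_2})=\tau_{\mathcal{B}}(z^{k_1+k_2}y_{i_1}y_{i_2})$, so it is the $m\times m$ block matrix whose $(k_1,k_2)$ block is $A^{k_1+k_2}$. *)

theory Defs
  imports Main "HOL.Modules"
begin

definition is_algebra :: "('r::comm_ring_1 \<Rightarrow> 'h::ring_1 \<Rightarrow> 'h) \<Rightarrow> bool" where
  "is_algebra scale \<longleftrightarrow> module scale \<and>
     (\<forall>r a b. scale r (a * b) = scale r a * b \<and> scale r (a * b) = a * scale r b)"

definition is_basis_family ::
    "('r::comm_ring_1 \<Rightarrow> 'h::ab_group_add \<Rightarrow> 'h) \<Rightarrow> ('i \<Rightarrow> 'h) \<Rightarrow> 'i set \<Rightarrow> bool" where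
  "is_basis_family scale b I \<longleftrightarrow> inj_on b I \<and>
     \<not> module.dependent scale (b ` I) \<and> module.span scale (b ` I) = UNIV"

end

theory Submission
  imports Defs
begin

lemma is_algebra_mult_scale_mult:
  assumes "is_algebra scale"
  shows "a * scale r x * b = scale r (a * x * b)"
  using assms unfolding is_algebra_def by metis

theorem lemma3p1:
  fixes scale :: "'r::comm_ring_1 \<Rightarrow> 'h::ring_1 \<Rightarrow> 'h"
    and z :: 'h and y :: "nat \<Rightarrow> 'h" and m l :: nat
    and tau :: "'h \<Rightarrow> 'r"
    and \<zeta> :: "nat \<Rightarrow> nat \<Rightarrow> nat \<Rightarrow> 'r"
  assumes alg: "is_algebra scale"
    and m_pos: "m \<ge> 1" and l_pos: "l \<ge> 1"
    and central: "\<forall>h. z * h = h * z"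
    and y0: "y 0 = 1"
    and basis: "is_basis_family scale (\<lambda>(k, i). z ^ k * y i) ({..<m} \<times> {..<l})"
    and tau_lin: "module_hom scale (*) tau"
    and tau_one: "tau 1 = 1"
    and tau_basis: "\<forall>k<m. \<forall>i<l. z ^ k * y i \<noteq> 1 \<longrightarrow> tau (z ^ k * y i) = 0"
    and zeta: "\<forall>i<l. z ^ m * y i = (\<Sum>p<m. \<Sum>q<l. scale (\<zeta> p i q) (z ^ p * y q))"
  shows "\<forall>\<alpha>. \<alpha> + 2 \<le> m \<longrightarrow> (\<forall>i1<l. \<forall>i2<l.
           tau (z ^ (\<alpha> + m) * y i1 * y i2)
         = (\<Sum>p<m. \<Sum>q<l. \<zeta> p i1 q * tau (z ^ (\<alpha> + p) * y q * y i2)))"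
proof (intro allI impI)
  fix \<alpha> i1 i2 assume i1: "i1 < l"
  interpret tau: module_hom scale "(*)" tau by (rule tau_lin)
  have "z ^ (\<alpha> + m) * y i1 * y i2 = z ^ \<alpha> * (z ^ m * y i1) * y i2"
    by (simp add: power_add mult.assoc)
  also have "\<dots> = (\<Sum>p<m. \<Sum>q<l. z ^ \<alpha> * scale (\<zeta> p i1 q) (z ^ p * y q) * y i2)"
    using zeta i1 by (simp add: sum_distrib_left sum_distrib_right)
  also have "\<dots> = (\<Sum>p<m. \<Sum>q<l. scale (\<zeta> p i1 q) (z ^ (\<alpha> + p) * y q * y i2))"
    by (simp only: is_algebra_mult_scale_mult[OF alg]) (simp add: power_add mult.assoc)
  finally show "tau (z ^ (\<alpha> + m) * y i1 * y i2)
      = (\<Sum>p<m. \<Sum>q<l. \<zeta> p i1 q * tau (z ^ (\<alpha> + p) * y q * y i2))"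
    by (simp add: tau.sum tau.scale)
qed

end
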